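(* Let $m,n\ge1$, let $a_1,\dots,a_n\in\mathbb{C}$ be distinct, let $m_1,\dots,m_n\ge 1$ be integers, let $c_0,\dots,c_{m-1},b_k^{(j)}\in\mathbb{C}$, and let $$r(\lambda)=\lambda^m-c_{m-1}\lambda^{m-1}-\cdots-c_1\lambda-c_0-\sum_{j=1}^n\sum_{k=1}^{m_j}\frac{b_k^{(j)}}{(\lambda-a_j)^k}.$$ If $\lambda_0$ is a zero of $r$, then (1) $|\lambda_0|\le \max_{1\le j\le n}\Big\{1+|a_j|,\ \sum_{j=1}^n\sum_{k=1}^{m_j}|b_k^{(j)}|+\sum_{i=0}^{m-1}|c_i|\Big\}$; (2) if every $m_j=1$ (writing $b^{(j)}=b^{(j)}_1$), then $|\lambda_0|\le\max_{1\le j\le n,\,1\le i\le m-1}\{|a_j|+|b^{(j)}|,\ 1+|c_i|,\ |c_0|+n\}$; otherwise $|\lambda_0|\le \max_{1\le j\le n,\,1\le k\le m_j,\,1\le i\le m-1}\Big\{|a_j|+|b_k^{(j)}|,\ 1+|a_j|,\ 1+|c_i|,\ |c_0|+\sum_{j=1}^n m_j\Big\}$.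
   Context: A zero of $r$ is a $\lambda_0\in\mathbb{C}\setminus\{a_1,\dots,a_n\}$ with $r(\lambda_0)=0$. *)

theory Defs
  imports "HOL-Analysis.Analysis"
begin

definition rfun :: "nat \<Rightarrow> (nat \<Rightarrow> complex) \<Rightarrow> nat \<Rightarrow> (nat \<Rightarrow> complex) \<Rightarrow> (nat \<Rightarrow> nat)
    \<Rightarrow> (nat \<Rightarrow> nat \<Rightarrow> complex) \<Rightarrow> complex \<Rightarrow> complex" where
  "rfun m c n a mj b l =
     l ^ m - (\<Sum>i<m. c i * l ^ i)
       - (\<Sum>j=1..n. \<Sum>k=1..mj j. b j k / (l - a j) ^ k)"

end

theory Submission
  imports Defs
begin

(* At a zero l0 of r, l0^m = (SUM i<m. c_i l0^i) + R, where R is the partial-fraction part.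
   If |l0| > 1 + |a_j| for all j, then every |l0 - a_j| >= 1, so |R| <= SUM |b_jk|, and dividing
   |l0|^m <= SUM |c_i| |l0|^i + |R| by |l0|^(m-1) gives (1).
   If |l0| exceeded a bound in (2), every summand b_jk / (l0 - a_j)^k of R would have modulus < 1
   (for k > 1 because |l0 - a_j| > 1), so |R| < SUM m_j.  On the other hand 1 + |c_i| <= |l0| for
   i >= 1 makes SUM |c_i| |l0|^i telescope to at most |c_0| + |l0|^m - |l0|, whence
   |l0| <= |c_0| + |R| < |c_0| + SUM m_j, contradicting the bound. *)

lemma sum_mult_power_le_telescoping:
  fixes x :: "nat \<Rightarrow> real"
  assumes "m \<ge> 1" "L \<ge> 0" "\<forall>i\<in>{1..m-1}. x i + 1 \<le> L"
  shows "(\<Sum>i<m. x i * L ^ i) \<le> x 0 + L ^ m - L"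
  using assms
proof (induction m rule: nat_induct_at_least)
  case base
  then show ?case by simp
next
  case (Suc k)
  have "\<forall>i\<in>{1..k-1}. x i + 1 \<le> L"
    using Suc.prems by auto
  then have "(\<Sum>i<k. x i * L ^ i) \<le> x 0 + L ^ k - L"
    using Suc.IH Suc.prems by blast
  moreover have "x k * L ^ k \<le> (L - 1) * L ^ k"
    using bspec[OF Suc.prems(2), of k] Suc.hyps Suc.prems(1)
    by (intro mult_right_mono) auto
  ultimately show ?case
    by (simp add: algebra_simps)
qed

lemma norm_power_le_sum_norm_coeffs:
  fixes z :: "'a::real_normed_field"
  assumes "z ^ m = (\<Sum>i<m. c i * z ^ i) + R"
  shows "norm z ^ m \<le> (\<Sum>i<m. norm (c i) * norm z ^ i) + norm R"
proof -
  have "norm z ^ m \<le> norm (\<Sum>i<m. c i * z ^ i) + norm R"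
    unfolding norm_power[symmetric] assms by (rule norm_triangle_ineq)
  also have "norm (\<Sum>i<m. c i * z ^ i) \<le> (\<Sum>i<m. norm (c i) * norm z ^ i)"
    using norm_sum[of "\<lambda>i. c i * z ^ i" "{..<m}"] by (simp add: norm_mult norm_power)
  finally show ?thesis
    by simp
qed

lemma norm_le_sum_norm_coeffs_add_norm:
  fixes z :: "'a::real_normed_field"
  assumes "m \<ge> 1" "norm z \<ge> 1" "z ^ m = (\<Sum>i<m. c i * z ^ i) + R"
  shows "norm z \<le> (\<Sum>i<m. norm (c i)) + norm R"
proof -
  have "norm z * norm z ^ (m - 1) = norm z ^ m"
    using assms(1) by (metis power_Suc Suc_diff_le diff_Suc_1)
  also have "\<dots> \<le> (\<Sum>i<m. norm (c i) * norm z ^ i) + norm R"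
    using assms(3) by (rule norm_power_le_sum_norm_coeffs)
  also have "\<dots> \<le> (\<Sum>i<m. norm (c i) * norm z ^ (m - 1)) + norm R * norm z ^ (m - 1)"
  proof (rule add_mono)
    show "(\<Sum>i<m. norm (c i) * norm z ^ i) \<le> (\<Sum>i<m. norm (c i) * norm z ^ (m - 1))"
      using assms(2) by (intro sum_mono mult_left_mono power_increasing) auto
    show "norm R \<le> norm R * norm z ^ (m - 1)"
      using assms(2) by (simp add: mult_le_cancel_left1)
  qed
  also have "\<dots> = ((\<Sum>i<m. norm (c i)) + norm R) * norm z ^ (m - 1)"
    by (simp add: sum_distrib_right distrib_right)
  finally have "norm z * norm z ^ (m - 1) \<le> ((\<Sum>i<m. norm (c i)) + norm R) * norm z ^ (m - 1)" .
  moreover have "norm z ^ (m - 1) > 0"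
    using assms(2) by (intro zero_less_power) linarith
  ultimately show ?thesis
    by (rule mult_right_le_imp_le)
qed

lemma norm_le_norm_coeff0_add_norm:
  fixes z :: "'a::real_normed_field"
  assumes "m \<ge> 1" "z ^ m = (\<Sum>i<m. c i * z ^ i) + R"
    "\<forall>i\<in>{1..m-1}. 1 + norm (c i) \<le> norm z"
  shows "norm z \<le> norm (c 0) + norm R"
proof -
  have "norm z ^ m \<le> (\<Sum>i<m. norm (c i) * norm z ^ i) + norm R"
    using assms(2) by (rule norm_power_le_sum_norm_coeffs)
  also have "(\<Sum>i<m. norm (c i) * norm z ^ i) \<le> norm (c 0) + norm z ^ m - norm z"
    using assms(1,3) by (intro sum_mult_power_le_telescoping) auto
  finally show ?thesis
    by simp
qed

lemma norm_partial_fractions_le: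
  fixes z :: "'a::real_normed_field"
  assumes "\<forall>j\<in>J. 1 \<le> norm (z - a j)"
  shows "norm (\<Sum>j\<in>J. \<Sum>k\<in>K j. b j k / (z - a j) ^ k) \<le> (\<Sum>j\<in>J. \<Sum>k\<in>K j. norm (b j k))"
proof -
  have "norm (b j k / (z - a j) ^ k) \<le> norm (b j k)" if "j \<in> J" for j k
  proof -
    have "1 \<le> norm (z - a j) ^ k"
      using assms that by simp
    then have "norm (b j k) / norm (z - a j) ^ k \<le> norm (b j k) / 1"
      by (intro divide_left_mono) auto
    then show ?thesis
      by (simp add: norm_divide norm_power)
  qed
  then show ?thesis
    by (intro order_trans[OF norm_sum] sum_mono order_trans[OF norm_sum]) auto
qed

lemma norm_partial_fractions_less:
  fixes z :: "'a::real_normed_field"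
  assumes "finite J" "J \<noteq> {}" "\<forall>j\<in>J. finite (K j) \<and> K j \<noteq> {}"
    "\<forall>j\<in>J. \<forall>k\<in>K j. norm (b j k) < norm (z - a j) ^ k"
  shows "norm (\<Sum>j\<in>J. \<Sum>k\<in>K j. b j k / (z - a j) ^ k) < (\<Sum>j\<in>J. real (card (K j)))"
proof -
  have "norm (\<Sum>j\<in>J. \<Sum>k\<in>K j. b j k / (z - a j) ^ k) \<le> (\<Sum>j\<in>J. \<Sum>k\<in>K j. norm (b j k / (z - a j) ^ k))"
    by (intro order_trans[OF norm_sum] sum_mono norm_sum)
  also have "\<dots> < (\<Sum>j\<in>J. \<Sum>k\<in>K j. 1)"
  proof (intro sum_strict_mono)
    fix j k assume "j \<in> J" "k \<in> K j"
    then have "norm (b j k) < norm (z - a j) ^ k"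
      using assms(4) by blast
    moreover have "0 < norm (z - a j) ^ k"
      using calculation by (rule le_less_trans[OF norm_ge_zero])
    ultimately show "norm (b j k / (z - a j) ^ k) < 1"
      by (simp add: norm_divide norm_power)
  qed (use assms(1-3) in auto)
  finally show ?thesis
    by simp
qed

lemma rfun_eq_0_iff:
  "rfun m c n a mj b l = 0 \<longleftrightarrow>
     l ^ m = (\<Sum>i<m. c i * l ^ i) + (\<Sum>j=1..n. \<Sum>k=1..mj j. b j k / (l - a j) ^ k)"
  unfolding rfun_def by (auto simp: algebra_simps)

lemma rfun_root_bound_sum:
  assumes "m \<ge> 1" "n \<ge> 1" "rfun m c n a mj b l = 0"
  shows "norm l \<le> max (Max ((\<lambda>j. 1 + norm (a j)) ` {1..n}))
                        ((\<Sum>j=1..n. \<Sum>k=1..mj j. norm (b j k)) + (\<Sum>i<m. norm (c i)))"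
proof (cases "norm l \<le> Max ((\<lambda>j. 1 + norm (a j)) ` {1..n})")
  case False
  then have far: "\<forall>j\<in>{1..n}. 1 + norm (a j) < norm l"
    using assms(2) by (simp add: not_le)
  have "1 \<le> norm (l - a j)" if "j \<in> {1..n}" for j
    using far that norm_triangle_ineq2[of l "a j"] by fastforce
  then have partial: "norm (\<Sum>j=1..n. \<Sum>k=1..mj j. b j k / (l - a j) ^ k)
      \<le> (\<Sum>j=1..n. \<Sum>k=1..mj j. norm (b j k))"
    by (intro norm_partial_fractions_le) blast
  have "1 + norm (a 1) < norm l"
    using far assms(2) by simp
  then have "1 \<le> norm l"
    using norm_ge_zero[of "a 1"] by linarith
  then have "norm l \<le> (\<Sum>i<m. norm (c i)) + norm (\<Sum>j=1..n. \<Sum>k=1..mj j. b j k / (l - a j) ^ k)"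
    using assms(1,3) by (intro norm_le_sum_norm_coeffs_add_norm) (simp_all add: rfun_eq_0_iff)
  with partial show ?thesis
    by simp
qed simp

lemma rfun_root_less_coeff0_add_pole_orders:
  assumes "m \<ge> 1" "n \<ge> 1" "\<forall>j\<in>{1..n}. mj j \<ge> 1" "rfun m c n a mj b l = 0"
    "\<forall>i\<in>{1..m-1}. 1 + norm (c i) \<le> norm l"
    "\<forall>j\<in>{1..n}. \<forall>k\<in>{1..mj j}. norm (b j k) < norm (l - a j) ^ k"
  shows "norm l < norm (c 0) + real (\<Sum>j=1..n. mj j)"
proof -
  have "norm (\<Sum>j=1..n. \<Sum>k=1..mj j. b j k / (l - a j) ^ k) < (\<Sum>j=1..n. real (card {1..mj j}))"
    using assms(2,3,6) by (intro norm_partial_fractions_less) auto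
  moreover have "norm l \<le> norm (c 0) + norm (\<Sum>j=1..n. \<Sum>k=1..mj j. b j k / (l - a j) ^ k)"
    using assms(1,4,5) by (intro norm_le_norm_coeff0_add_norm) (simp_all add: rfun_eq_0_iff)
  ultimately show ?thesis
    by simp
qed

lemma rfun_root_bound_simple_poles:
  assumes "m \<ge> 1" "n \<ge> 1" "\<forall>j\<in>{1..n}. mj j = 1" "rfun m c n a mj b l = 0"
  shows "norm l \<le> Max ((\<lambda>j. norm (a j) + norm (b j 1)) ` {1..n}
                          \<union> (\<lambda>i. 1 + norm (c i)) ` {1..m-1}
                          \<union> {norm (c 0) + real n})"
    (is "_ \<le> Max ?S")
proof (rule ccontr)
  assume "\<not> norm l \<le> Max ?S"
  then have "\<forall>x\<in>?S. x < norm l"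
    by (subst (asm) not_le, subst (asm) Max_less_iff) auto
  then have pole: "\<forall>j\<in>{1..n}. norm (a j) + norm (b j 1) < norm l"
    and coeff: "\<forall>i\<in>{1..m-1}. 1 + norm (c i) \<le> norm l"
    and coeff0: "norm (c 0) + real n < norm l"
    by (auto intro!: less_imp_le)
  have "norm (b j k) < norm (l - a j) ^ k" if "j \<in> {1..n}" "k \<in> {1..mj j}" for j k
  proof -
    have "k = 1"
      using assms(3) that by simp
    moreover have "norm (a j) + norm (b j 1) < norm l"
      using pole that(1) by blast
    ultimately show ?thesis
      using norm_triangle_ineq2[of l "a j"] by simp
  qed
  then have "norm l < norm (c 0) + real (\<Sum>j=1..n. mj j)"
    using assms coeff by (intro rfun_root_less_coeff0_add_pole_orders) auto
  with coeff0 assms(3) show False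
    by simp
qed

lemma rfun_root_bound_multiple_poles:
  assumes "m \<ge> 1" "n \<ge> 1" "\<forall>j\<in>{1..n}. mj j \<ge> 1" "rfun m c n a mj b l = 0"
  shows "norm l \<le> Max ((\<lambda>(j,k). norm (a j) + norm (b j k)) ` (SIGMA j:{1..n}. {1..mj j})
                          \<union> (\<lambda>j. 1 + norm (a j)) ` {1..n}
                          \<union> (\<lambda>i. 1 + norm (c i)) ` {1..m-1}
                          \<union> {norm (c 0) + real (\<Sum>j=1..n. mj j)})"
    (is "_ \<le> Max ?S")
proof (rule ccontr)
  assume "\<not> norm l \<le> Max ?S"
  then have "\<forall>x\<in>?S. x < norm l"
    by (subst (asm) not_le, subst (asm) Max_less_iff) auto
  then have pole: "\<forall>j\<in>{1..n}. \<forall>k\<in>{1..mj j}. norm (a j) + norm (b j k) < norm l"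
    and far: "\<forall>j\<in>{1..n}. 1 + norm (a j) < norm l"
    and coeff: "\<forall>i\<in>{1..m-1}. 1 + norm (c i) \<le> norm l"
    and coeff0: "norm (c 0) + real (\<Sum>j=1..n. mj j) < norm l"
    by (auto simp: image_iff intro!: less_imp_le)
  have "norm (b j k) < norm (l - a j) ^ k" if "j \<in> {1..n}" "k \<in> {1..mj j}" for j k
  proof -
    have "norm (b j k) < norm (l - a j)" and "1 < norm (l - a j)"
      using pole far that norm_triangle_ineq2[of l "a j"] by fastforce+
    moreover have "norm (l - a j) \<le> norm (l - a j) ^ k"
      using calculation(2) that by (intro power_increasing[of 1, simplified]) auto
    ultimately show ?thesis
      by linarith
  qed
  then have "norm l < norm (c 0) + real (\<Sum>j=1..n. mj j)"
    using assms coeff by (intro rfun_root_less_coeff0_add_pole_orders) auto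
  with coeff0 show False
    by simp
qed

theorem theorem3p3:
  fixes m n :: nat and a :: "nat \<Rightarrow> complex" and mj :: "nat \<Rightarrow> nat"
    and c :: "nat \<Rightarrow> complex" and b :: "nat \<Rightarrow> nat \<Rightarrow> complex" and l0 :: complex
  assumes "m \<ge> 1" and "n \<ge> 1"
    and "inj_on a {1..n}"
    and "\<forall>j\<in>{1..n}. mj j \<ge> 1"
    and "l0 \<notin> a ` {1..n}"
    and "rfun m c n a mj b l0 = 0"
  shows "norm l0 \<le> max (Max ((\<lambda>j. 1 + norm (a j)) ` {1..n}))
                        ((\<Sum>j=1..n. \<Sum>k=1..mj j. norm (b j k)) + (\<Sum>i<m. norm (c i)))
       \<and> ((\<forall>j\<in>{1..n}. mj j = 1) \<longrightarrow>
           norm l0 \<le> Max ((\<lambda>j. norm (a j) + norm (b j 1)) ` {1..n}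
                          \<union> (\<lambda>i. 1 + norm (c i)) ` {1..m-1}
                          \<union> {norm (c 0) + real n}))
       \<and> (\<not> (\<forall>j\<in>{1..n}. mj j = 1) \<longrightarrow>
           norm l0 \<le> Max ((\<lambda>(j,k). norm (a j) + norm (b j k)) ` (SIGMA j:{1..n}. {1..mj j})
                          \<union> (\<lambda>j. 1 + norm (a j)) ` {1..n}
                          \<union> (\<lambda>i. 1 + norm (c i)) ` {1..m-1}
                          \<union> {norm (c 0) + real (\<Sum>j=1..n. mj j)}))"
  using rfun_root_bound_sum[OF assms(1,2,6)]
    rfun_root_bound_simple_poles[OF assms(1,2) _ assms(6)]
    rfun_root_bound_multiple_poles[OF assms(1,2,4,6)]
  by blast

end
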